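(* Let $\mu=-1$, $p_{0x}=p_{01}=p_{x1}=-7$, and let $\nu>0$, $d$ be the corresponding integration constants (normalized with $0\le\Re d\le\pi$). Then $\frac{\Im d}{\nu}=\frac\pi2$. Consequently the first approximation $$y_1(x)=\frac{(3-2i\nu)^2}{16\nu^2}e^{-2id}x^{-2i\nu}-\frac{9-4\nu^2}{8\nu^2}+\frac{(3+2i\nu)^2}{16\nu^2}e^{2id}x^{2i\nu}$$ has two infinite sequences of zeros in $D_0=\{x:|x|\le|x_0(1)|\}$, $|x_0(1)|=2.91\ldots\times10^{-2}$, accumulating at $x=0$ along the negative imaginary axis: $$x_k(1)=\exp\{-i\tfrac\pi2\}\exp\Big\{-\frac{\Re d}\nu-\frac{k\pi}\nu\Big\},\qquad x_k(2)=x_k(1)\exp\Big\{-\frac i\nu\ln\frac{3-2i\nu}{3+2i\nu}\Big\}=x_k(1)\exp\Big\{\frac1\nu\arg\frac{3-2i\nu}{3+2i\nu}\Big\},\qquad k\in\mathbb N.$$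
   Context: For $PVI_\mu$ (the Painlevé VI equation with parameters $\alpha=(2\mu-1)^2/2$, $\beta=\gamma=0$, $\delta=1/2$), branches near $x=0$ of the form $\frac1{y(x)}=\sum_{n\ge1}x^{n-1}\sum_{m=-n}^nA_{nm}(\nu,\mu)e^{2imd}x^{2im\nu}$ (with $\nu>0$, $d\in\mathbb C$, $x^{2im\nu}=e^{2im\nu\log x}$) correspond to monodromy data $(\mu,p_{0x},p_{01},p_{x1})$ of the associated isomonodromic Fuchsian system with $p_{0x}<-2$; the integration constants are given by $p_{0x}=-2\cosh(2\pi\nu)$, $\nu>0$, and $$d=\frac i2\ln\Big\{-\frac{4\cdot16^{2i\nu}\,\Gamma(\frac32-\mu-i\nu)^2\,\Gamma(\mu+\frac12-i\nu)^2}{(2\nu+i(1-2\mu))^2\nu^2\sinh(2\pi\nu)^2\Gamma(-i\nu)^4}\Big[\tfrac12\big(e^{2\pi\nu}p_{x1}-p_{01}\big)\sinh(2\pi\nu)+\big(\cos(2\pi\mu)+1\big)\big(e^{2\pi\nu}+1\big)\Big]\Big\}$$ modulo $\pi$. The case $\mu=-1$, $p_{0x}=p_{01}=p_{x1}=-7$ is the branch associated with the quantum cohomology of $\mathbb{CP}^2$; the displayed $y_1$ is the $n=1$ term of the series for this $\mu$. *)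

theory Defs
  imports "HOL-Analysis.Analysis"
begin

definition cpow :: "complex \<Rightarrow> complex \<Rightarrow> complex" where
  "cpow x s = exp (s * Ln x)"

text \<open>The argument of the logarithm in the formula for the integration constant d
  (depends on mu, p01, px1 and nu, where p0x = -2 cosh(2 pi nu)).\<close>
definition d_argument :: "real \<Rightarrow> real \<Rightarrow> real \<Rightarrow> real \<Rightarrow> complex" where
  "d_argument mu p01 px1 nu =
     - (4 * exp (2 * \<i> * of_real nu * of_real (ln 16))
          * Gamma (3/2 - of_real mu - \<i> * of_real nu) ^ 2
          * Gamma (of_real mu + 1/2 - \<i> * of_real nu) ^ 2)
       / ((2 * of_real nu + \<i> * (1 - 2 * of_real mu)) ^ 2 * of_real nu ^ 2
          * of_real (sinh (2 * pi * nu)) ^ 2 * Gamma (- \<i> * of_real nu) ^ 4)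
     * of_real (1/2 * (exp (2 * pi * nu) * px1 - p01) * sinh (2 * pi * nu)
                + (cos (2 * pi * mu) + 1) * (exp (2 * pi * nu) + 1))"

definition is_integration_constant_d :: "real \<Rightarrow> real \<Rightarrow> real \<Rightarrow> real \<Rightarrow> complex \<Rightarrow> bool" where
  "is_integration_constant_d mu p01 px1 nu d \<longleftrightarrow>
     (\<exists>n::int. d = \<i> / 2 * Ln (d_argument mu p01 px1 nu) + of_int n * of_real pi)"

definition y1 :: "real \<Rightarrow> complex \<Rightarrow> complex \<Rightarrow> complex" where
  "y1 nu d x =
     (3 - 2 * \<i> * of_real nu) ^ 2 / (16 * of_real nu ^ 2) * exp (- 2 * \<i> * d) * cpow x (- 2 * \<i> * of_real nu)
     - (9 - 4 * of_real nu ^ 2) / (8 * of_real nu ^ 2)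
     + (3 + 2 * \<i> * of_real nu) ^ 2 / (16 * of_real nu ^ 2) * exp (2 * \<i> * d) * cpow x (2 * \<i> * of_real nu)"

definition zero_seq1 :: "real \<Rightarrow> complex \<Rightarrow> nat \<Rightarrow> complex" where
  "zero_seq1 nu d k = exp (- \<i> * of_real pi / 2) * exp (of_real (- Re d / nu - real k * pi / nu))"

definition zero_seq2 :: "real \<Rightarrow> complex \<Rightarrow> nat \<Rightarrow> complex" where
  "zero_seq2 nu d k = zero_seq1 nu d k
     * exp (- \<i> / of_real nu * Ln ((3 - 2 * \<i> * of_real nu) / (3 + 2 * \<i> * of_real nu)))"

end

theory Submission
  imports Defs
begin

text \<open>
  For \<mu> = -1 the Gamma factors in the argument of the logarithm defining d reduce, by the
  recursion, duplication and reflection formulas, to the single ratio B = \<Gamma>(z)^2 / \<Gamma>(2z) at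
  z = 1/2 - i\<nu>. The condition cosh 2\<pi>\<nu> = 7/2 forces exp(\<pi>\<nu>) = (3 + sqrt 5)/2, which makes
  the modulus of B elementary, and the whole argument becomes exp(\<pi>\<nu> + i(4T - \<pi>)), where T is
  the sum of the arguments of the factors k(2z + k)/(z + k)^2, k \<ge> 1, of Gauss's product for B.
  Hence Im d = \<pi>\<nu>/2 and Re d = \<pi>/2 - 2T. On the negative imaginary axis y1 is a quadratic
  in W = exp(2i(Re d + \<nu> log |x|)) with the roots W = 1 and W = ((3 - 2i\<nu>)/(3 + 2i\<nu>))^2,
  which give the two geometric sequences of zeros. Their largest modulus exp(-Re d/\<nu>) is located
  by enclosing T: fifteen explicit terms plus a telescoping bound for the tail.
\<close>

section \<open>Elementary bounds\<close>

lemma exp_le_taylor_quotient: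
  fixes x :: real
  assumes "0 \<le> x" "x ^ n / fact n < 1"
  shows "exp x \<le> (\<Sum>m<n. x ^ m / fact m) / (1 - x ^ n / fact n)"
proof -
  obtain t where t: "\<bar>t\<bar> \<le> \<bar>x\<bar>" "exp x = (\<Sum>m<n. x ^ m / fact m) + exp t / fact n * x ^ n"
    using Maclaurin_exp_le by blast
  have "exp t \<le> exp x"
    using t(1) assms by simp
  then have "exp t / fact n * x ^ n \<le> exp x * (x ^ n / fact n)"
    using assms by (simp add: divide_right_mono mult_right_mono)
  then have "exp x \<le> (\<Sum>m<n. x ^ m / fact m) + exp x * (x ^ n / fact n)"
    using t(2) by linarith
  then have "exp x * (1 - x ^ n / fact n) \<le> (\<Sum>m<n. x ^ m / fact m)"
    by (simp add: algebra_simps)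
  then show ?thesis
    using assms by (simp add: pos_le_divide_eq)
qed

lemma taylor_le_exp:
  fixes x :: real
  assumes "0 \<le> x"
  shows "(\<Sum>m<n. x ^ m / fact m) \<le> exp x"
proof -
  obtain t where "exp x = (\<Sum>m<n. x ^ m / fact m) + exp t / fact n * x ^ n"
    using Maclaurin_exp_le by blast
  then show ?thesis
    using assms by simp
qed

lemma sqrt_5_bounds: "2.23606 \<le> sqrt (5::real)" "sqrt (5::real) \<le> 2.2361"
proof -
  have "sqrt ((2.23606::real)\<^sup>2) \<le> sqrt 5" "sqrt 5 \<le> sqrt ((2.2361::real)\<^sup>2)"
    by (simp_all add: power2_eq_square)
  then show "2.23606 \<le> sqrt (5::real)" "sqrt (5::real) \<le> 2.2361"
    by simp_all
qed

lemma inverse_one_plus_square_bounds: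
  fixes y :: real
  shows "1 - y\<^sup>2 \<le> inverse (1 + y\<^sup>2)" and "inverse (1 + y\<^sup>2) \<le> 1 - y\<^sup>2 + y ^ 4"
proof -
  have pos: "0 < 1 + y\<^sup>2"
    by (simp add: add_pos_nonneg)
  have "(1 - y\<^sup>2) * (1 + y\<^sup>2) = 1 - (y\<^sup>2)\<^sup>2" and "(1 - y\<^sup>2 + y ^ 4) * (1 + y\<^sup>2) = 1 + (y ^ 3)\<^sup>2"
    by (simp_all add: algebra_simps power2_eq_square numeral_eq_Suc)
  then have "(1 - y\<^sup>2) * (1 + y\<^sup>2) \<le> 1" and "1 \<le> (1 - y\<^sup>2 + y ^ 4) * (1 + y\<^sup>2)"
    by simp_all
  with pos show "1 - y\<^sup>2 \<le> inverse (1 + y\<^sup>2)" and "inverse (1 + y\<^sup>2) \<le> 1 - y\<^sup>2 + y ^ 4"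
    by (simp_all add: inverse_eq_divide pos_le_divide_eq pos_divide_le_eq)
qed

lemma arctan_ge_cubic:
  fixes x :: real
  assumes "0 \<le> x"
  shows "x - x ^ 3 / 3 \<le> arctan x"
proof -
  have "(\<lambda>y. arctan y - (y - y ^ 3 / 3)) 0 \<le> (\<lambda>y. arctan y - (y - y ^ 3 / 3)) x"
  proof (rule DERIV_nonneg_imp_nondecreasing[OF assms])
    fix y :: real
    have "DERIV (\<lambda>y. arctan y - (y - y ^ 3 / 3)) y :> inverse (1 + y\<^sup>2) - (1 - y\<^sup>2)"
      by (auto intro!: derivative_eq_intros simp: power2_eq_square power3_eq_cube)
    then show "\<exists>d. DERIV (\<lambda>y. arctan y - (y - y ^ 3 / 3)) y :> d \<and> 0 \<le> d"
      using inverse_one_plus_square_bounds(1)[of y] by auto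
  qed
  then show ?thesis
    by simp
qed

lemma arctan_le_quintic:
  fixes x :: real
  assumes "0 \<le> x"
  shows "arctan x \<le> x - x ^ 3 / 3 + x ^ 5 / 5"
proof -
  have "(\<lambda>y. y - y ^ 3 / 3 + y ^ 5 / 5 - arctan y) 0 \<le> (\<lambda>y. y - y ^ 3 / 3 + y ^ 5 / 5 - arctan y) x"
  proof (rule DERIV_nonneg_imp_nondecreasing[OF assms])
    fix y :: real
    have "DERIV (\<lambda>y. y - y ^ 3 / 3 + y ^ 5 / 5 - arctan y) y :> 1 - y\<^sup>2 + y ^ 4 - inverse (1 + y\<^sup>2)"
      by (auto intro!: derivative_eq_intros simp: power2_eq_square power3_eq_cube numeral_eq_Suc)
    then show "\<exists>d. DERIV (\<lambda>y. y - y ^ 3 / 3 + y ^ 5 / 5 - arctan y) y :> d \<and> 0 \<le> d"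
      using inverse_one_plus_square_bounds(2)[of y] by auto
  qed
  then show ?thesis
    by simp
qed

lemma arctan_ge_small:
  fixes t :: real
  assumes "0 \<le> t" "t \<le> 1/100"
  shows "(1 - 1/30000) * t \<le> arctan t"
proof -
  have "t\<^sup>2 \<le> (1/100)\<^sup>2"
    using assms by (intro power_mono) auto
  then have "t\<^sup>2 * t \<le> (1/100)\<^sup>2 * t"
    using assms(1) by (rule mult_right_mono)
  then have "(1 - 1/30000) * t \<le> t - t ^ 3 / 3"
    by (simp add: power3_eq_cube power2_eq_square)
  also have "\<dots> \<le> arctan t"
    using arctan_ge_cubic[OF assms(1)] .
  finally show ?thesis .
qed

section \<open>The argument of the Gamma ratio on the line Re z = 1/2\<close>

lemma Im_nonzero_imp_not_nonpos_Ints: "Im (w :: complex) \<noteq> 0 \<Longrightarrow> w \<notin> \<int>\<^sub>\<le>\<^sub>0"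
  using nonpos_Ints_subset_nonpos_Reals complex_nonpos_Reals_iff by blast

lemma sgn_eq_exp_arctan:
  fixes u :: complex
  assumes "0 < Re u"
  shows "sgn u = exp (\<i> * of_real (arctan (Im u / Re u)))"
proof -
  define r where "r = Im u / Re u"
  have Im_u: "Im u = r * Re u"
    unfolding r_def using assms by simp
  have "cmod u = sqrt ((Re u)\<^sup>2 * (1 + r\<^sup>2))"
    unfolding cmod_def Im_u by (simp add: algebra_simps power2_eq_square)
  also have "\<dots> = Re u * sqrt (1 + r\<^sup>2)"
    using assms by (simp add: real_sqrt_mult)
  finally have norm_u: "cmod u = Re u * sqrt (1 + r\<^sup>2)" .
  have pos: "0 < 1 + r\<^sup>2"
    by (simp add: add_pos_nonneg)
  then have "u = of_real (cmod u) * exp (\<i> * of_real (arctan r))"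
    by (simp add: complex_eq_iff Re_exp Im_exp cos_arctan sin_arctan norm_u Im_u)
  moreover have "0 < cmod u"
    using assms norm_u pos by simp
  ultimately have "sgn u = sgn (of_real (cmod u)) * sgn (exp (\<i> * of_real (arctan r)))"
    by (metis sgn_mult)
  also have "\<dots> = exp (\<i> * of_real (arctan r))"
    using \<open>0 < cmod u\<close> by (simp add: sgn_of_real sgn_eq)
  finally show ?thesis
    unfolding r_def .
qed

lemma sgn_scaleR_pos: "0 < (c :: real) \<Longrightarrow> sgn (of_real c * u :: complex) = sgn u"
  by (simp add: sgn_mult sgn_of_real)

text \<open>The tangent of the argument of k(2z + k)/(z + k)^2 for z = 1/2 - i nu, computed as
  Im u / Re u with u = (2z + k) (cnj (z + k))^2.\<close>

definition phase_tan :: "real \<Rightarrow> real \<Rightarrow> real" where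
  "phase_tan nu k = nu * (k + 1/2 + 2 * nu\<^sup>2) / ((k + 1) * (k + 1/2)\<^sup>2 + nu\<^sup>2 * (3 * k + 1))"

lemma phase_tan_nonneg: "0 \<le> nu \<Longrightarrow> 0 \<le> k \<Longrightarrow> 0 \<le> phase_tan nu k"
  unfolding phase_tan_def by (intro divide_nonneg_pos) (simp_all add: add_pos_nonneg)

definition phase_sum :: "real \<Rightarrow> real" where
  "phase_sum nu = (\<Sum>n. arctan (phase_tan nu (real n + 1)))"

definition duplication_product :: "complex \<Rightarrow> nat \<Rightarrow> complex" where
  "duplication_product z n = fact n * pochhammer (2 * z) (Suc n) / pochhammer z (Suc n) ^ 2"

lemma LIMSEQ_duplication_product:
  assumes "z \<notin> \<int>\<^sub>\<le>\<^sub>0" "2 * z \<notin> \<int>\<^sub>\<le>\<^sub>0"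
  shows "duplication_product z \<longlonglongrightarrow> Gamma z ^ 2 / Gamma (2 * z)"
proof -
  have "Gamma_series z n ^ 2 / Gamma_series (2 * z) n = duplication_product z n" for n
  proof -
    have "pochhammer z (Suc n) \<noteq> 0" "pochhammer (2 * z) (Suc n) \<noteq> 0"
      using assms by (auto dest: pochhammer_eq_0_imp_nonpos_Int)
    moreover have "exp (z * of_real (ln (real n))) ^ 2 = exp (2 * z * of_real (ln (real n)))"
      by (simp add: power2_eq_square exp_add[symmetric] algebra_simps)
    ultimately show ?thesis
      unfolding Gamma_series_def duplication_product_def by (simp add: field_simps power2_eq_square)
  qed
  moreover have "(\<lambda>n. Gamma_series z n ^ 2 / Gamma_series (2 * z) n) \<longlonglongrightarrow> Gamma z ^ 2 / Gamma (2 * z)"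
    using assms by (intro tendsto_intros) (simp add: Gamma_eq_zero_iff)
  ultimately show ?thesis
    by simp
qed

lemma duplication_product_Suc:
  assumes "z \<notin> \<int>\<^sub>\<le>\<^sub>0"
  shows "duplication_product z (Suc n)
    = duplication_product z n * (of_nat (Suc n) * (2 * z + of_nat (Suc n)) / (z + of_nat (Suc n)) ^ 2)"
proof -
  have "pochhammer z (Suc n) \<noteq> 0"
    using assms by (auto dest: pochhammer_eq_0_imp_nonpos_Int)
  then show ?thesis
    unfolding duplication_product_def by (simp add: pochhammer_Suc field_simps power2_eq_square)
qed

lemma sgn_duplication_factor:
  fixes nu k :: real
  assumes "0 < k"
  defines "z \<equiv> 1/2 - \<i> * of_real nu"
  shows "sgn (of_real k * (2 * z + of_real k) / (z + of_real k) ^ 2) = exp (\<i> * of_real (arctan (phase_tan nu k)))"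
proof -
  define w where "w = z + of_real k"
  define u where "u = (2 * z + of_real k) * cnj w ^ 2"
  have "w \<noteq> 0"
    unfolding w_def z_def using assms by (simp add: complex_eq_iff)
  have "w ^ 2 * cnj w ^ 2 = (w * cnj w) ^ 2"
    by (simp add: power_mult_distrib)
  also have "\<dots> = (of_real ((cmod w)\<^sup>2))\<^sup>2"
    by (simp only: complex_norm_square)
  also have "\<dots> = of_real ((cmod w) ^ 4)"
    by (simp add: power2_eq_square power4_eq_xxxx mult.assoc)
  finally have "w ^ 2 * cnj w ^ 2 = of_real ((cmod w) ^ 4)" .
  then have "of_real k * (2 * z + of_real k) / w ^ 2 = of_real (k / (cmod w) ^ 4) * u"
    unfolding u_def using \<open>w \<noteq> 0\<close> by (simp add: field_simps)
  moreover have "Re u = (k + 1) * (k + 1/2)\<^sup>2 + nu\<^sup>2 * (3 * k + 1)" "Im u = nu * (k + 1/2 + 2 * nu\<^sup>2)"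
    unfolding u_def w_def z_def by (simp_all add: power2_eq_square algebra_simps)
  moreover have "0 < (k + 1) * (k + 1/2)\<^sup>2 + nu\<^sup>2 * (3 * k + 1)"
    using assms by (simp add: add_pos_nonneg)
  ultimately show ?thesis
    using assms \<open>w \<noteq> 0\<close> unfolding w_def phase_tan_def by (simp add: sgn_scaleR_pos sgn_eq_exp_arctan)
qed

lemma sgn_duplication_product:
  fixes nu :: real
  assumes "nu \<noteq> 0"
  defines "z \<equiv> 1/2 - \<i> * of_real nu"
  shows "sgn (duplication_product z n)
    = exp (\<i> * of_real (arctan (2 * nu) + (\<Sum>i<n. arctan (phase_tan nu (real i + 1)))))"
proof (induction n)
  case 0
  have "z \<noteq> 0"
    unfolding z_def by (simp add: complex_eq_iff)
  then have "duplication_product z 0 = of_real (2 / (cmod z)\<^sup>2) * cnj z"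
    unfolding duplication_product_def
    by (simp add: field_simps power2_eq_square complex_norm_square[symmetric])
  then have "sgn (duplication_product z 0) = sgn (cnj z)"
    using \<open>z \<noteq> 0\<close> by (simp only:) (rule sgn_scaleR_pos, simp)
  also have "\<dots> = exp (\<i> * of_real (arctan (2 * nu)))"
    by (subst sgn_eq_exp_arctan) (simp_all add: z_def mult.commute)
  finally show ?case
    by simp
next
  case (Suc n)
  have "z \<notin> \<int>\<^sub>\<le>\<^sub>0"
    unfolding z_def using assms by (intro Im_nonzero_imp_not_nonpos_Ints) simp
  then have "sgn (duplication_product z (Suc n)) = sgn (duplication_product z n)
      * sgn (of_real (real (Suc n)) * (2 * z + of_real (real (Suc n))) / (z + of_real (real (Suc n))) ^ 2)"
    by (simp add: duplication_product_Suc sgn_mult)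
  also have "\<dots> = sgn (duplication_product z n) * exp (\<i> * of_real (arctan (phase_tan nu (real n + 1))))"
    unfolding z_def by (subst sgn_duplication_factor) (simp_all add: add.commute)
  finally show ?case
    unfolding Suc.IH by (simp add: exp_add[symmetric] algebra_simps)
qed

lemma sgn_Gamma_square_div_Gamma_double:
  fixes nu :: real
  assumes "nu \<noteq> 0" and summable: "summable (\<lambda>n. arctan (phase_tan nu (real n + 1)))"
  defines "z \<equiv> 1/2 - \<i> * of_real nu"
  shows "sgn (Gamma z ^ 2 / Gamma (2 * z)) = exp (\<i> * of_real (arctan (2 * nu) + phase_sum nu))"
proof (rule LIMSEQ_unique)
  have "Im z \<noteq> 0" "Im (2 * z) \<noteq> 0"
    unfolding z_def using assms by simp_all
  then have "z \<notin> \<int>\<^sub>\<le>\<^sub>0" "2 * z \<notin> \<int>\<^sub>\<le>\<^sub>0" "Gamma z ^ 2 / Gamma (2 * z) \<noteq> 0"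
    by (simp_all add: Im_nonzero_imp_not_nonpos_Ints Gamma_eq_zero_iff)
  then have "(\<lambda>n. sgn (duplication_product z n)) \<longlonglongrightarrow> sgn (Gamma z ^ 2 / Gamma (2 * z))"
    by (intro tendsto_sgn LIMSEQ_duplication_product)
  then show "(\<lambda>n. exp (\<i> * of_real (arctan (2 * nu) + (\<Sum>i<n. arctan (phase_tan nu (real i + 1))))))
      \<longlonglongrightarrow> sgn (Gamma z ^ 2 / Gamma (2 * z))"
    unfolding z_def sgn_duplication_product[OF assms(1)] .
  show "(\<lambda>n. exp (\<i> * of_real (arctan (2 * nu) + (\<Sum>i<n. arctan (phase_tan nu (real i + 1))))))
      \<longlonglongrightarrow> exp (\<i> * of_real (arctan (2 * nu) + phase_sum nu))"
    unfolding phase_sum_def by (intro tendsto_intros summable_LIMSEQ summable)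
qed

section \<open>Numerical enclosure of the phase sum\<close>

lemma arctan_phase_tan_enclosure:
  fixes a b nu k ql qh :: real
  assumes "0 < a" "a \<le> nu" "nu \<le> b" "0 \<le> k" "0 \<le> ql"
    and lo: "ql \<le> a * (k + 1/2 + 2 * a\<^sup>2) / ((k + 1) * (k + 1/2)\<^sup>2 + b\<^sup>2 * (3 * k + 1))"
    and hi: "b * (k + 1/2 + 2 * b\<^sup>2) / ((k + 1) * (k + 1/2)\<^sup>2 + a\<^sup>2 * (3 * k + 1)) \<le> qh"
  shows "ql - ql ^ 3 / 3 \<le> arctan (phase_tan nu k) \<and> arctan (phase_tan nu k) \<le> qh - qh ^ 3 / 3 + qh ^ 5 / 5"
proof -
  have sq: "a\<^sup>2 \<le> nu\<^sup>2" "nu\<^sup>2 \<le> b\<^sup>2"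
    using assms by (auto intro: power_mono)
  have "0 < (k + 1) * (k + 1/2)\<^sup>2"
    using assms by simp
  then have "ql \<le> phase_tan nu k" "phase_tan nu k \<le> qh"
    unfolding phase_tan_def using assms sq
    by (auto intro!: order.trans[OF lo] order.trans[OF _ hi] frac_le mult_mono add_mono
        add_pos_nonneg mult_nonneg_nonneg)
  then show ?thesis
    using arctan_ge_cubic[of ql] arctan_le_quintic[of qh] arctan_monotone'
      phase_tan_nonneg[of nu k] assms by (meson order.trans)
qed

lemma sum_arctan_phase_tan_initial_bounds:
  fixes nu :: real
  assumes "30634/100000 \<le> nu" "nu \<le> 30636/100000"
  shows "0.22481862 \<le> (\<Sum>i<15. arctan (phase_tan nu (real i + 1)))"
    and "(\<Sum>i<15. arctan (phase_tan nu (real i + 1))) \<le> 0.22483986"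
proof -
  define ql :: "real list" where "ql =
    [0.10604334, 0.04242524, 0.02262152, 0.01401409, 0.00952103, 0.00688563, 0.00520953,
     0.00407815, 0.00327879, 0.00269324, 0.00225155, 0.00191020, 0.00164096, 0.00142486, 0.00124879]"
  define qh :: "real list" where "qh =
    [0.10605288, 0.04242859, 0.02262321, 0.01401511, 0.00952172, 0.00688612, 0.00520990,
     0.00407844, 0.00327902, 0.00269343, 0.00225171, 0.00191034, 0.00164108, 0.00142497, 0.00124889]"
  have "ql ! i - (ql ! i) ^ 3 / 3 \<le> arctan (phase_tan nu (real i + 1))
      \<and> arctan (phase_tan nu (real i + 1)) \<le> qh ! i - (qh ! i) ^ 3 / 3 + (qh ! i) ^ 5 / 5"
    if "i < 15" for i
  proof (rule arctan_phase_tan_enclosure[OF _ assms])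
    from that have "i \<in> {..<15}"
      by simp
    then show "0 \<le> ql ! i"
      and "ql ! i \<le> 30634/100000 * (real i + 1 + 1/2 + 2 * (30634/100000)\<^sup>2)
        / ((real i + 1 + 1) * (real i + 1 + 1/2)\<^sup>2 + (30636/100000)\<^sup>2 * (3 * (real i + 1) + 1))"
      and "30636/100000 * (real i + 1 + 1/2 + 2 * (30636/100000)\<^sup>2)
        / ((real i + 1 + 1) * (real i + 1 + 1/2)\<^sup>2 + (30634/100000)\<^sup>2 * (3 * (real i + 1) + 1)) \<le> qh ! i"
      unfolding ql_def qh_def by (auto simp: lessThan_nat_numeral divide_simps)
  qed simp_all
  then have "(\<Sum>i<15. ql ! i - (ql ! i) ^ 3 / 3) \<le> (\<Sum>i<15. arctan (phase_tan nu (real i + 1)))"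
    and "(\<Sum>i<15. arctan (phase_tan nu (real i + 1))) \<le> (\<Sum>i<15. qh ! i - (qh ! i) ^ 3 / 3 + (qh ! i) ^ 5 / 5)"
    by (auto intro!: sum_mono)
  moreover have "0.22481862 \<le> (\<Sum>i<15. ql ! i - (ql ! i) ^ 3 / 3 :: real)"
    and "(\<Sum>i<15. qh ! i - (qh ! i) ^ 3 / 3 + (qh ! i) ^ 5 / 5 :: real) \<le> 0.22483986"
    unfolding ql_def qh_def by (simp_all add: lessThan_nat_numeral power_divide)
  ultimately show "0.22481862 \<le> (\<Sum>i<15. arctan (phase_tan nu (real i + 1)))"
    and "(\<Sum>i<15. arctan (phase_tan nu (real i + 1))) \<le> 0.22483986"
    by linarith+
qed

lemma phase_tan_le_telescoping:
  fixes nu k :: real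
  assumes "0 < nu" "nu\<^sup>2 \<le> 1/10" "0 \<le> k"
  shows "phase_tan nu k \<le> nu / ((k + 3/20) * (k + 23/20))"
proof -
  have "((k + 1) * (k + 1/2)\<^sup>2 + nu\<^sup>2 * (3 * k + 1)) - (k + 1/2 + 2 * nu\<^sup>2) * ((k + 3/20) * (k + 23/20))
      = (1/5 - 2 * nu\<^sup>2) * k\<^sup>2 + (4275/10000 + 4/10 * nu\<^sup>2) * k + (16375/100000 + 655/1000 * nu\<^sup>2)"
    by (simp add: field_simps power2_eq_square)
  also have "\<dots> \<ge> 0"
    using assms by (intro add_nonneg_nonneg mult_nonneg_nonneg) auto
  finally have "(k + 1/2 + 2 * nu\<^sup>2) * ((k + 3/20) * (k + 23/20)) \<le> (k + 1) * (k + 1/2)\<^sup>2 + nu\<^sup>2 * (3 * k + 1)"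
    by simp
  moreover have N: "0 < k + 1/2 + 2 * nu\<^sup>2" and "0 < (k + 3/20) * (k + 23/20)"
    and "0 < (k + 1) * (k + 1/2)\<^sup>2 + nu\<^sup>2 * (3 * k + 1)"
    using assms by (simp_all add: add_pos_nonneg)
  ultimately have "phase_tan nu k \<le> nu * (k + 1/2 + 2 * nu\<^sup>2) / ((k + 1/2 + 2 * nu\<^sup>2) * ((k + 3/20) * (k + 23/20)))"
    unfolding phase_tan_def using assms by (intro divide_left_mono) simp_all
  then show ?thesis
    using N by simp
qed

lemma phase_tan_ge_telescoping:
  fixes nu k :: real
  assumes "0 < nu" "9/100 \<le> nu\<^sup>2" "nu\<^sup>2 \<le> 1/10" "16 \<le> k"
  shows "nu / ((k + 1/5) * (k + 6/5)) \<le> phase_tan nu k"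
proof -
  have "16 * k \<le> k\<^sup>2"
    using assms by (simp add: power2_eq_square mult_right_mono)
  then have "(8/100) * (16 * k) \<le> (2 * nu\<^sup>2 - 1/10) * k\<^sup>2"
    using assms by (intro mult_mono) auto
  moreover have "(31/100 + nu\<^sup>2 / 5) * k \<le> (33/100) * k"
    using assms by (intro mult_right_mono) auto
  ultimately have "0 \<le> (2 * nu\<^sup>2 - 1/10) * k\<^sup>2 - (31/100 + nu\<^sup>2 / 5) * k - (13/100 + 13/25 * nu\<^sup>2)"
    using assms by linarith
  also have "\<dots> = (k + 1/2 + 2 * nu\<^sup>2) * ((k + 1/5) * (k + 6/5)) - ((k + 1) * (k + 1/2)\<^sup>2 + nu\<^sup>2 * (3 * k + 1))"
    by (simp add: field_simps power2_eq_square)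
  finally have "(k + 1) * (k + 1/2)\<^sup>2 + nu\<^sup>2 * (3 * k + 1) \<le> (k + 1/2 + 2 * nu\<^sup>2) * ((k + 1/5) * (k + 6/5))"
    by simp
  moreover have "0 < k + 1/2 + 2 * nu\<^sup>2" "0 < (k + 1) * (k + 1/2)\<^sup>2 + nu\<^sup>2 * (3 * k + 1)"
    using assms by (simp_all add: add_pos_nonneg)
  ultimately show ?thesis
    using assms unfolding phase_tan_def by (simp add: divide_simps mult_left_mono)
qed

lemma sums_inverse_consecutive_products:
  fixes c :: real
  assumes "0 < c"
  shows "(\<lambda>n. 1 / ((real n + c) * (real n + c + 1))) sums (1 / c)"
proof -
  have "filterlim (\<lambda>n. c + real n) at_top sequentially"
    by (rule filterlim_tendsto_add_at_top[OF tendsto_const filterlim_real_sequentially])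
  then have "(\<lambda>n. 1 / (real n + c)) \<longlonglongrightarrow> 0"
    by (intro tendsto_divide_0[OF tendsto_const] filterlim_at_top_imp_at_infinity) (simp add: add.commute)
  from telescope_sums'[OF this] have "(\<lambda>n. 1 / (real n + c) - 1 / (real (Suc n) + c)) sums (1 / c)"
    by simp
  moreover have "1 / (real n + c) - 1 / (real (Suc n) + c) = 1 / ((real n + c) * (real n + c + 1))" for n
    using assms by (simp add: field_simps)
  ultimately show ?thesis
    by simp
qed

lemma arctan_phase_tan_le_telescoping:
  fixes nu k :: real
  assumes "0 < nu" "nu\<^sup>2 \<le> 1/10" "0 \<le> k"
  shows "arctan (phase_tan nu k) \<le> nu * (1 / ((k + 3/20) * (k + 3/20 + 1)))"
proof -
  have "arctan (phase_tan nu k) \<le> phase_tan nu k"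
    using phase_tan_nonneg[of nu k] assms arctan_le_self by simp
  also have "\<dots> \<le> nu * (1 / ((k + 3/20) * (k + 3/20 + 1)))"
    using phase_tan_le_telescoping[OF assms] by (simp add: add_ac)
  finally show ?thesis .
qed

lemma arctan_phase_tan_ge_telescoping:
  fixes nu k :: real
  assumes "0 < nu" "9/100 \<le> nu\<^sup>2" "nu\<^sup>2 \<le> 1/10" "16 \<le> k"
  shows "(1 - 1/30000) * (nu * (1 / ((k + 1/5) * (k + 1/5 + 1)))) \<le> arctan (phase_tan nu k)"
proof -
  have "nu \<le> 1"
    using power2_le_imp_le[of nu 1] assms by simp
  have "phase_tan nu k \<le> nu / ((k + 3/20) * (k + 23/20))"
    using phase_tan_le_telescoping assms by simp
  also have "\<dots> \<le> 1 / (16 * 16)"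
    using assms \<open>nu \<le> 1\<close> by (intro frac_le mult_mono) auto
  finally have "phase_tan nu k \<le> 1/100"
    by simp
  then have small: "(1 - 1/30000) * phase_tan nu k \<le> arctan (phase_tan nu k)"
    using arctan_ge_small phase_tan_nonneg assms by simp
  have "nu * (1 / ((k + 1/5) * (k + 1/5 + 1))) \<le> phase_tan nu k"
    using phase_tan_ge_telescoping[OF assms] by (simp add: add_ac)
  then have "(1 - 1/30000) * (nu * (1 / ((k + 1/5) * (k + 1/5 + 1)))) \<le> (1 - 1/30000) * phase_tan nu k"
    by (rule mult_left_mono) simp
  with small show ?thesis
    by linarith
qed

lemma summable_arctan_phase_tan:
  fixes nu :: real
  assumes "0 < nu" "nu\<^sup>2 \<le> 1/10"
  shows "summable (\<lambda>n. arctan (phase_tan nu (real n + 1)))"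
proof (rule summable_comparison_test')
  show "summable (\<lambda>n. nu * (1 / ((real n + 23/20) * (real n + 23/20 + 1))))"
    by (intro summable_mult sums_summable[OF sums_inverse_consecutive_products]) simp
  show "norm (arctan (phase_tan nu (real n + 1))) \<le> nu * (1 / ((real n + 23/20) * (real n + 23/20 + 1)))" for n
    using arctan_phase_tan_le_telescoping[OF assms, of "real n + 1"] phase_tan_nonneg[of nu "real n + 1"] assms
    by (simp add: add.assoc)
qed

lemma sum_arctan_phase_tan_tail_bounds:
  fixes nu :: real
  assumes "0 < nu" "9/100 \<le> nu\<^sup>2" "nu\<^sup>2 \<le> 1/10"
  shows "(1 - 1/30000) * (nu / (81/5)) \<le> (\<Sum>n. arctan (phase_tan nu (real n + 16)))"
    and "(\<Sum>n. arctan (phase_tan nu (real n + 16))) \<le> nu / (323/20)"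
proof -
  have summable: "summable (\<lambda>n. arctan (phase_tan nu (real n + 16)))"
    using summable_ignore_initial_segment[OF summable_arctan_phase_tan[OF assms(1,3)], of 15]
    by (simp add: add.assoc)
  have lower: "(1 - 1/30000) * (nu * (1 / ((real n + 81/5) * (real n + 81/5 + 1))))
      \<le> arctan (phase_tan nu (real n + 16))" for n
    using arctan_phase_tan_ge_telescoping[OF assms, of "real n + 16"] by (simp add: add.assoc)
  have "(\<lambda>n. (1 - 1/30000) * (nu * (1 / ((real n + 81/5) * (real n + 81/5 + 1)))))
      sums ((1 - 1/30000) * (nu * (1 / (81/5))))"
    by (intro sums_mult sums_inverse_consecutive_products) simp
  from sums_le[OF lower this summable_sums[OF summable]]
  show "(1 - 1/30000) * (nu / (81/5)) \<le> (\<Sum>n. arctan (phase_tan nu (real n + 16)))"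
    by simp
  have upper: "arctan (phase_tan nu (real n + 16)) \<le> nu * (1 / ((real n + 323/20) * (real n + 323/20 + 1)))" for n
    using arctan_phase_tan_le_telescoping[OF assms(1,3), of "real n + 16"] by (simp add: add.assoc)
  have "(\<lambda>n. nu * (1 / ((real n + 323/20) * (real n + 323/20 + 1)))) sums (nu * (1 / (323/20)))"
    by (intro sums_mult sums_inverse_consecutive_products) simp
  from sums_le[OF upper summable_sums[OF summable] this]
  show "(\<Sum>n. arctan (phase_tan nu (real n + 16))) \<le> nu / (323/20)"
    by simp
qed

lemma phase_sum_bounds:
  fixes nu :: real
  assumes lower: "30634/100000 \<le> nu" and upper: "nu \<le> 30636/100000"
  shows "0.243727 \<le> phase_sum nu" and "phase_sum nu \<le> 0.24381"
proof -
  have "(30634/100000)\<^sup>2 \<le> nu\<^sup>2" "nu\<^sup>2 \<le> (30636/100000)\<^sup>2"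
    using assms by (auto intro: power_mono)
  then have nu: "0 < nu" "9/100 \<le> nu\<^sup>2" "nu\<^sup>2 \<le> 1/10"
    using lower by (simp_all add: power_divide)
  have "phase_sum nu = (\<Sum>n. arctan (phase_tan nu (real n + 16))) + (\<Sum>i<15. arctan (phase_tan nu (real i + 1)))"
    unfolding phase_sum_def
    using suminf_split_initial_segment[OF summable_arctan_phase_tan[OF nu(1,3)], of 15]
    by (simp add: add.assoc)
  moreover have "(1 - 1/30000) * ((30634/100000) / (81/5)) \<le> (1 - 1/30000) * (nu / (81/5))"
    using lower by (intro mult_left_mono divide_right_mono) auto
  moreover have "nu / (323/20) \<le> (30636/100000) / (323/20)"
    using upper by (intro divide_right_mono) auto
  ultimately show "0.243727 \<le> phase_sum nu" and "phase_sum nu \<le> 0.24381"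
    using sum_arctan_phase_tan_tail_bounds[OF nu] sum_arctan_phase_tan_initial_bounds[OF assms]
    by simp_all
qed

section \<open>The integration constant\<close>

lemma cosh_complex_of_real: "cosh (complex_of_real x) = complex_of_real (cosh x)"
  using exp_of_real[of "-x"] by (simp add: cosh_def scaleR_conv_of_real exp_of_real)

lemma sinh_complex_of_real: "sinh (complex_of_real x) = complex_of_real (sinh x)"
  using exp_of_real[of "-x"] by (simp add: sinh_def scaleR_conv_of_real exp_of_real)

lemma norm_Gamma_half_minus_i_squared:
  fixes nu :: real
  shows "(norm (Gamma (1/2 - \<i> * of_real nu)))\<^sup>2 = pi / cosh (pi * nu)"
proof -
  define z where "z = 1/2 - \<i> * of_real nu"
  have "Gamma z * Gamma (1 - z) = of_real pi / sin (of_real pi * z)"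
    by (rule Gamma_reflection_complex)
  also have "sin (of_real pi * z) = cos (\<i> * of_real (pi * nu))"
    unfolding z_def by (simp add: algebra_simps sin_diff sin_of_real cos_of_real)
  also have "\<dots> = of_real (cosh (pi * nu))"
    by (subst cosh_conv_cos[symmetric]) (rule cosh_complex_of_real)
  finally have "Gamma z * cnj (Gamma z) = of_real (pi / cosh (pi * nu))"
    by (simp add: cnj_Gamma z_def complex_eq_iff)
  then show ?thesis
    unfolding z_def complex_norm_square[symmetric] of_real_eq_iff .
qed

lemma norm_Gamma_one_minus_2i_squared:
  fixes nu :: real
  assumes "nu \<noteq> 0"
  shows "(norm (Gamma (1 - 2 * \<i> * of_real nu)))\<^sup>2 = 2 * pi * nu / sinh (2 * pi * nu)"
proof -
  define w where "w = 2 * \<i> * of_real nu"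
  have "w \<notin> \<int>\<^sub>\<le>\<^sub>0"
    unfolding w_def using assms by (intro Im_nonzero_imp_not_nonpos_Ints) simp
  have "Gamma w * Gamma (1 - w) = of_real pi / sin (of_real pi * w)"
    by (rule Gamma_reflection_complex)
  also have "sin (of_real pi * w) = \<i> * of_real (sinh (2 * pi * nu))"
    unfolding w_def by (simp add: sinh_conv_sin sinh_complex_of_real[symmetric] algebra_simps)
  finally have reflection: "Gamma w * Gamma (1 - w) = of_real pi / (\<i> * of_real (sinh (2 * pi * nu)))" .
  have "cnj (1 - w) = w + 1"
    unfolding w_def by (simp add: complex_eq_iff)
  then have "Gamma (1 - w) * cnj (Gamma (1 - w)) = Gamma (1 - w) * Gamma (w + 1)"
    by (simp only: cnj_Gamma)
  also have "\<dots> = w * (Gamma w * Gamma (1 - w))"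
    using Gamma_plus1[OF \<open>w \<notin> \<int>\<^sub>\<le>\<^sub>0\<close>] by (simp add: algebra_simps)
  also have "\<dots> = of_real (2 * pi * nu / sinh (2 * pi * nu))"
    unfolding reflection unfolding w_def by (simp add: field_simps)
  finally show ?thesis
    unfolding w_def complex_norm_square[symmetric] of_real_eq_iff .
qed

lemma Gamma_shifts_nonreal:
  fixes z :: complex
  assumes "Im z \<noteq> 0"
  shows "Gamma (z + 1 + 1) = (z + 1) * z * Gamma z"
    and "Gamma (z - 1) = Gamma z / (z - 1)"
    and "Gamma (z - 1/2) = exp ((1 - 2 * z) * of_real (ln 2)) * of_real (sqrt pi) * Gamma (2 * z) / Gamma z / (z - 1/2)"
proof -
  have z_ok: "z \<notin> \<int>\<^sub>\<le>\<^sub>0" "z + 1 \<notin> \<int>\<^sub>\<le>\<^sub>0" "z - 1 \<notin> \<int>\<^sub>\<le>\<^sub>0" "z - 1/2 \<notin> \<int>\<^sub>\<le>\<^sub>0" "z + 1/2 \<notin> \<int>\<^sub>\<le>\<^sub>0"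
    using assms by (simp_all add: Im_nonzero_imp_not_nonpos_Ints)
  have "z - 1 \<noteq> 0" "z - 1/2 \<noteq> 0"
    using assms by (auto simp: complex_eq_iff)
  moreover have "Gamma z \<noteq> 0"
    using z_ok(1) by (simp add: Gamma_eq_zero_iff)
  ultimately have nonzero: "z - 1 \<noteq> 0" "z - 1/2 \<noteq> 0" "Gamma z \<noteq> 0"
    by simp_all
  show "Gamma (z + 1 + 1) = (z + 1) * z * Gamma z"
    using Gamma_plus1[OF z_ok(2)] Gamma_plus1[OF z_ok(1)] by simp
  show "Gamma (z - 1) = Gamma z / (z - 1)"
    using Gamma_plus1[OF z_ok(3)] nonzero by (simp add: field_simps)
  have "Gamma z * Gamma (z + 1/2) = exp ((1 - 2 * z) * of_real (ln 2)) * of_real (sqrt pi) * Gamma (2 * z)"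
    by (rule Gamma_legendre_duplication[OF z_ok(1) z_ok(5)])
  moreover have "Gamma (z + 1/2) = (z - 1/2) * Gamma (z - 1/2)"
    using Gamma_plus1[OF z_ok(4)] by (simp add: algebra_simps)
  ultimately have "Gamma z * ((z - 1/2) * Gamma (z - 1/2))
      = exp ((1 - 2 * z) * of_real (ln 2)) * of_real (sqrt pi) * Gamma (2 * z)"
    by simp
  then show "Gamma (z - 1/2) = exp ((1 - 2 * z) * of_real (ln 2)) * of_real (sqrt pi) * Gamma (2 * z) / Gamma z / (z - 1/2)"
    using nonzero by (simp add: field_simps)
qed

lemma d_argument_mu_minus_one:
  fixes nu p01 px1 :: real
  assumes nu: "0 < nu"
  defines "z \<equiv> 1/2 - \<i> * of_real nu"
  shows "d_argument (-1) p01 px1 nu =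
    of_real (nu\<^sup>2 / (pi\<^sup>2 * (sinh (2 * pi * nu))\<^sup>2)) * (z / (z - 1))\<^sup>2 * (Gamma z ^ 2 / Gamma (2 * z)) ^ 4
    * of_real (1/2 * (exp (2 * pi * nu) * px1 - p01) * sinh (2 * pi * nu) + 2 * (exp (2 * pi * nu) + 1))"
proof -
  define E where "E = exp ((1 - 2 * z) * of_real (ln 2))"
  define G1 where "G1 = Gamma z"
  define G2 where "G2 = Gamma (2 * z)"
  define S where "S = sinh (2 * pi * nu)"
  define sp where "sp = sqrt pi"
  have "Im z \<noteq> 0"
    unfolding z_def using nu by simp
  note shifts = Gamma_shifts_nonreal[OF this, folded E_def G1_def G2_def sp_def]
  have "z \<noteq> 0" "z - 1 \<noteq> 0" "z + 1 \<noteq> 0"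
    using \<open>Im z \<noteq> 0\<close> by (auto simp: complex_eq_iff)
  moreover have "G1 \<noteq> 0" "G2 \<noteq> 0" "E \<noteq> 0"
    using \<open>Im z \<noteq> 0\<close> unfolding G1_def G2_def E_def
    by (simp_all add: Gamma_eq_zero_iff Im_nonzero_imp_not_nonpos_Ints)
  ultimately have nonzero: "G1 \<noteq> 0" "G2 \<noteq> 0" "E \<noteq> 0" "z \<noteq> 0" "z - 1 \<noteq> 0" "z + 1 \<noteq> 0"
    by simp_all
  have exp16: "exp (2 * \<i> * of_real nu * of_real (ln 16)) = E ^ 4"
  proof -
    have "ln (16 :: real) = 4 * ln 2"
      using ln_realpow[of 2 4] by simp
    then show ?thesis
      unfolding E_def exp_of_nat_mult[symmetric] z_def by (simp add: algebra_simps)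
  qed
  have arguments: "3/2 - of_real (-1) - \<i> * of_real nu = z + 1 + 1"
    "of_real (-1) + 1/2 - \<i> * of_real nu = z - 1"
    "- \<i> * of_real nu = z - 1/2"
    "2 * of_real nu + \<i> * (1 - 2 * of_real (-1)) = 2 * \<i> * (z + 1)"
    unfolding z_def by (simp_all add: algebra_simps)
  have "d_argument (-1) p01 px1 nu
    = - (4 * E ^ 4 * ((z + 1) * z * G1) ^ 2 * (G1 / (z - 1)) ^ 2)
      / ((2 * \<i> * (z + 1)) ^ 2 * of_real nu ^ 2 * of_real S ^ 2 * (E * of_real sp * G2 / G1 / (z - 1/2)) ^ 4)
      * of_real (1/2 * (exp (2 * pi * nu) * px1 - p01) * S + 2 * (exp (2 * pi * nu) + 1))"
    unfolding d_argument_def arguments exp16 shifts S_def[symmetric] by simp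
  also have "\<dots> = of_real (nu\<^sup>2 / (sp ^ 4 * S\<^sup>2)) * (z / (z - 1))\<^sup>2 * (G1 ^ 2 / G2) ^ 4
      * of_real (1/2 * (exp (2 * pi * nu) * px1 - p01) * S + 2 * (exp (2 * pi * nu) + 1))"
  proof -
    have "(- \<i> * of_real nu) ^ 4 = (of_real nu ^ 4 :: complex)" "(2 * \<i> * (z + 1)) ^ 2 = - 4 * (z + 1) ^ 2"
      by (simp_all add: power_mult_distrib)
    moreover have "S \<noteq> 0" "sp \<noteq> 0"
      unfolding S_def sp_def using nu by simp_all
    ultimately show ?thesis
      unfolding arguments(3)[symmetric] using nonzero nu
      by (simp add: field_simps) (simp add: algebra_simps eval_nat_numeral)
  qed
  also have "sp ^ 4 = pi\<^sup>2"
    unfolding sp_def using power_mult[of "sqrt pi" 2 2] by simp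
  finally show ?thesis
    unfolding S_def G1_def G2_def .
qed

lemma square_ratio_half_minus_i:
  fixes nu :: real
  shows "((1/2 - \<i> * of_real nu) / ((1/2 - \<i> * of_real nu) - 1)) ^ 2 = exp (- 4 * \<i> * of_real (arctan (2 * nu)))"
proof -
  define a where "a = 1/2 + \<i> * of_real nu"
  define alpha where "alpha = arctan (2 * nu)"
  have "a \<noteq> 0"
    unfolding a_def by (simp add: complex_eq_iff)
  have "sgn a = exp (\<i> * of_real alpha)"
    unfolding alpha_def by (subst sgn_eq_exp_arctan) (simp_all add: a_def mult.commute)
  define N where "N = norm a"
  have "N \<noteq> 0"
    unfolding N_def using \<open>a \<noteq> 0\<close> by simp
  have a: "a = of_real N * exp (\<i> * of_real alpha)"
    unfolding N_def using \<open>a \<noteq> 0\<close> \<open>sgn a = _\<close> by (simp add: sgn_eq field_simps)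
  have "cnj a = of_real N * exp (- \<i> * of_real alpha)"
    by (subst a) (simp add: exp_cnj)
  have "1/2 - \<i> * of_real nu = cnj a" "(1/2 - \<i> * of_real nu) - 1 = - a"
    unfolding a_def by (simp_all add: complex_eq_iff)
  then have "(1/2 - \<i> * of_real nu) / ((1/2 - \<i> * of_real nu) - 1) = cnj a / (- a)"
    by simp
  also have "\<dots> = - (exp (- \<i> * of_real alpha) / exp (\<i> * of_real alpha))"
    unfolding \<open>cnj a = _\<close> using \<open>N \<noteq> 0\<close> by (subst a) simp
  also have "\<dots> = - exp (- 2 * \<i> * of_real alpha)"
    by (simp add: exp_diff[symmetric] algebra_simps)
  finally show ?thesis
    unfolding alpha_def by (simp add: power2_eq_square exp_add[symmetric] mult.assoc)
qed

lemma hyperbolic_values_of_cosh_double_eq: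
  fixes x :: real
  assumes "0 < x" "cosh (2 * x) = 7/2"
  shows "cosh x = 3/2" "sinh x = sqrt 5 / 2" "exp x = (3 + sqrt 5) / 2"
    "sinh (2 * x) = 3 * sqrt 5 / 2" "exp (2 * x) = (7 + 3 * sqrt 5) / 2"
proof -
  have "(cosh x)\<^sup>2 = (3/2)\<^sup>2" "(sinh x)\<^sup>2 = (sqrt 5 / 2)\<^sup>2"
    using assms(2) cosh_double_cosh[of x] cosh_square_eq[of x] by (simp_all add: power_divide)
  moreover have "0 \<le> sinh x"
    using assms(1) by simp
  ultimately show cosh: "cosh x = 3/2" and sinh: "sinh x = sqrt 5 / 2"
    by (simp_all add: power2_eq_iff_nonneg)
  show "exp x = (3 + sqrt 5) / 2"
    unfolding cosh_plus_sinh[symmetric] cosh sinh by simp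
  show "sinh (2 * x) = 3 * sqrt 5 / 2"
    unfolding sinh_double cosh sinh by simp
  then show "exp (2 * x) = (7 + 3 * sqrt 5) / 2"
    unfolding cosh_plus_sinh[symmetric] assms(2) by simp
qed

lemma bounds_of_cosh_double_pi_eq:
  fixes nu :: real
  assumes "0 < nu" "cosh (2 * pi * nu) = 7/2"
  shows "30634/100000 \<le> nu" "nu \<le> 30636/100000"
proof -
  have exp: "exp (pi * nu) = (3 + sqrt 5) / 2"
    using hyperbolic_values_of_cosh_double_eq[of "pi * nu"] assms by (simp add: mult.assoc)
  have "exp (9624/10000 :: real) \<le> (\<Sum>m<12. (9624/10000::real) ^ m / fact m) / (1 - (9624/10000::real) ^ 12 / fact 12)"
    by (rule exp_le_taylor_quotient) (simp_all add: fact_numeral power_divide)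
  also have "\<dots> \<le> exp (pi * nu)"
    using exp sqrt_5_bounds by (simp add: fact_numeral lessThan_nat_numeral power_divide)
  finally have "9624/10000 / pi \<le> nu"
    by (simp add: pos_divide_le_eq ac_simps)
  moreover have "30634/100000 \<le> 9624/10000 / pi"
    using pi_approx by (simp add: divide_simps)
  ultimately show "30634/100000 \<le> nu"
    by linarith
  have "exp (pi * nu) \<le> (\<Sum>m<12. (96245/100000::real) ^ m / fact m)"
    using exp sqrt_5_bounds by (simp add: fact_numeral lessThan_nat_numeral power_divide)
  also have "\<dots> \<le> exp (96245/100000)"
    by (rule taylor_le_exp) simp
  finally have "nu \<le> 96245/100000 / pi"
    by (simp add: pos_le_divide_eq ac_simps)
  moreover have "96245/100000 / pi \<le> 30636/100000"
    using pi_approx by (simp add: divide_simps)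
  ultimately show "nu \<le> 30636/100000"
    by linarith
qed

lemma norm_Gamma_ratio_CP2:
  fixes nu :: real
  assumes "0 < nu" "cosh (2 * pi * nu) = 7/2"
  defines "z \<equiv> 1/2 - \<i> * of_real nu"
  shows "(norm (Gamma z ^ 2 / Gamma (2 * z))) ^ 4 = 5 * pi\<^sup>2 / (9 * nu\<^sup>2)"
proof -
  have cosh: "cosh (pi * nu) = 3/2" and sinh: "sinh (2 * pi * nu) = 3 * sqrt 5 / 2"
    using hyperbolic_values_of_cosh_double_eq[of "pi * nu"] assms(1,2) by (simp_all add: mult.assoc)
  have "(norm (Gamma z ^ 2 / Gamma (2 * z))) ^ 4 = ((norm (Gamma z))\<^sup>2) ^ 4 / ((norm (Gamma (2 * z)))\<^sup>2)\<^sup>2"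
    by (simp add: norm_divide norm_power power_divide flip: power_mult)
  also have "(norm (Gamma z))\<^sup>2 = 2 * pi / 3"
    unfolding z_def norm_Gamma_half_minus_i_squared cosh by simp
  also have "(norm (Gamma (2 * z)))\<^sup>2 = 2 * pi * nu / (3 * sqrt 5 / 2)"
  proof -
    have "2 * z = 1 - 2 * \<i> * of_real nu"
      unfolding z_def by (simp add: algebra_simps)
    then show ?thesis
      using norm_Gamma_one_minus_2i_squared[of nu] assms(1) unfolding sinh by simp
  qed
  also have "(2 * pi / 3) ^ 4 / (2 * pi * nu / (3 * sqrt 5 / 2))\<^sup>2 = 5 * pi\<^sup>2 / (9 * nu\<^sup>2)"
    using assms(1) by (simp add: field_simps power2_eq_square power4_eq_xxxx)
  finally show ?thesis .
qed

lemma Gamma_ratio_fourth_power_CP2: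
  fixes nu :: real
  assumes nu: "0 < nu" and cosh: "cosh (2 * pi * nu) = 7/2"
  defines "z \<equiv> 1/2 - \<i> * of_real nu"
  shows "(Gamma z ^ 2 / Gamma (2 * z)) ^ 4
    = of_real (5 * pi\<^sup>2 / (9 * nu\<^sup>2)) * exp (4 * \<i> * of_real (arctan (2 * nu) + phase_sum nu))"
proof -
  define B where "B = Gamma z ^ 2 / Gamma (2 * z)"
  define phi where "phi = arctan (2 * nu) + phase_sum nu"
  have "nu\<^sup>2 \<le> (30636/100000)\<^sup>2"
    using nu bounds_of_cosh_double_pi_eq[OF nu cosh] by (intro power_mono) auto
  then have "summable (\<lambda>n. arctan (phase_tan nu (real n + 1)))"
    using nu by (intro summable_arctan_phase_tan) (simp_all add: power_divide)
  then have "sgn B = exp (\<i> * of_real phi)"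
    unfolding B_def z_def phi_def using nu by (intro sgn_Gamma_square_div_Gamma_double) simp_all
  moreover from this have "B \<noteq> 0"
    by auto
  ultimately have "B = of_real (norm B) * exp (\<i> * of_real phi)"
    by (simp add: sgn_eq field_simps)
  then have "B ^ 4 = (of_real (norm B) * exp (\<i> * of_real phi)) ^ 4"
    by (rule arg_cong)
  also have "\<dots> = of_real ((norm B) ^ 4) * exp (4 * \<i> * of_real phi)"
    by (simp add: power_mult_distrib exp_of_nat_mult[symmetric] mult.assoc)
  also have "(norm B) ^ 4 = 5 * pi\<^sup>2 / (9 * nu\<^sup>2)"
    unfolding B_def z_def using nu cosh by (rule norm_Gamma_ratio_CP2)
  finally show ?thesis
    unfolding B_def phi_def .
qed

lemma d_argument_CP2:
  fixes nu :: real
  assumes nu: "0 < nu" and cosh: "cosh (2 * pi * nu) = 7/2"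
  shows "d_argument (-1) (-7) (-7) nu = exp (of_real (pi * nu) + \<i> * of_real (4 * phase_sum nu - pi))"
proof -
  define alpha where "alpha = arctan (2 * nu)"
  define T where "T = phase_sum nu"
  have "0 < pi * nu"
    using nu by simp
  note hyperbolic = hyperbolic_values_of_cosh_double_eq[of "pi * nu", unfolded mult.assoc[symmetric], OF this cosh]
  have bracket: "1/2 * (exp (2 * pi * nu) * - 7 - - 7) * sinh (2 * pi * nu) + 2 * (exp (2 * pi * nu) + 1)
      = - 81 * (3 + sqrt 5) / 8"
    unfolding hyperbolic(4,5) by (simp add: algebra_simps) argo
  have "d_argument (-1) (-7) (-7) nu
      = of_real (nu\<^sup>2 / (pi\<^sup>2 * (3 * sqrt 5 / 2)\<^sup>2)) * exp (- 4 * \<i> * of_real alpha)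
        * (of_real (5 * pi\<^sup>2 / (9 * nu\<^sup>2)) * exp (4 * \<i> * of_real (alpha + T)))
        * of_real (- 81 * (3 + sqrt 5) / 8)"
    unfolding d_argument_mu_minus_one[OF nu] square_ratio_half_minus_i Gamma_ratio_fourth_power_CP2[OF nu cosh] bracket
    unfolding alpha_def[symmetric] T_def[symmetric] hyperbolic(4) by simp
  also have "\<dots> = of_real (nu\<^sup>2 / (pi\<^sup>2 * (3 * sqrt 5 / 2)\<^sup>2) * (5 * pi\<^sup>2 / (9 * nu\<^sup>2)) * (- 81 * (3 + sqrt 5) / 8))
        * (exp (- 4 * \<i> * of_real alpha) * exp (4 * \<i> * of_real (alpha + T)))"
    by (simp only: of_real_mult ac_simps)
  also have "nu\<^sup>2 / (pi\<^sup>2 * (3 * sqrt 5 / 2)\<^sup>2) * (5 * pi\<^sup>2 / (9 * nu\<^sup>2)) * (- 81 * (3 + sqrt 5) / 8) = - exp (pi * nu)"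
    using hyperbolic nu by (simp add: field_simps power2_eq_square)
  also have "exp (- 4 * \<i> * of_real alpha) * exp (4 * \<i> * of_real (alpha + T)) = - exp (\<i> * of_real (4 * T - pi))"
    by (simp add: exp_add[symmetric] exp_diff algebra_simps)
  finally show ?thesis
    unfolding T_def exp_add exp_of_real by simp
qed

lemma integration_constant_CP2:
  fixes nu :: real and d :: complex
  assumes nu: "0 < nu" and cosh: "cosh (2 * pi * nu) = 7/2"
    and d: "is_integration_constant_d (-1) (-7) (-7) nu d"
    and d_norm: "0 \<le> Re d" "Re d \<le> pi"
  shows "Re d = pi / 2 - 2 * phase_sum nu" "Im d = pi * nu / 2"
proof -
  define T where "T = phase_sum nu"
  have T: "24/100 \<le> T" "T \<le> 1/4"
    unfolding T_def using phase_sum_bounds[OF bounds_of_cosh_double_pi_eq[OF nu cosh]] by simp_all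
  have Ln: "Ln (d_argument (-1) (-7) (-7) nu) = of_real (pi * nu) + \<i> * of_real (4 * T - pi)"
    unfolding d_argument_CP2[OF nu cosh] T_def[symmetric] using T pi_gt3 by (intro Ln_exp) simp_all
  obtain n :: int where d_eq: "d = \<i> / 2 * Ln (d_argument (-1) (-7) (-7) nu) + of_int n * of_real pi"
    using d unfolding is_integration_constant_d_def by blast
  have Re_d: "Re d = pi / 2 - 2 * T + n * pi" and Im_d: "Im d = pi * nu / 2"
    unfolding d_eq Ln by (simp_all add: algebra_simps)
  have "- pi < n * pi" "n * pi < pi"
    using Re_d d_norm T pi_gt3 by linarith+
  then have "0 < (n + 1) * pi" "0 < (1 - n) * pi"
    by (simp_all add: algebra_simps)
  then have "n = 0"
    using pi_gt_zero by (simp add: zero_less_mult_iff)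
  then show "Re d = pi / 2 - 2 * phase_sum nu" "Im d = pi * nu / 2"
    using Re_d Im_d unfolding T_def by simp_all
qed

section \<open>Zeros of the first approximation\<close>

lemma Ln_neg_i_exp: "Ln (- \<i> * of_real (exp r)) = of_real r - \<i> * of_real (pi / 2)"
proof -
  have "exp (of_real r - \<i> * of_real (pi / 2)) = exp (of_real r) * exp (- \<i> * of_real pi / 2)"
    by (simp add: exp_diff exp_minus field_simps flip: exp_add)
  also have "exp (- \<i> * of_real pi / 2) = - \<i>"
    by (simp add: complex_eq_iff Re_exp Im_exp)
  finally have "- \<i> * of_real (exp r) = exp (of_real r - \<i> * of_real (pi / 2))"
    by (simp add: exp_of_real)
  then show ?thesis
    by (simp only:) (rule Ln_exp; simp; use pi_gt_zero in linarith)
qed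

lemma y1_on_negative_imaginary_axis:
  fixes nu r :: real and d :: complex
  assumes "nu \<noteq> 0" "Im d = pi * nu / 2"
  defines "W \<equiv> exp (2 * \<i> * of_real (Re d + nu * r))"
  shows "y1 nu d (- \<i> * of_real (exp r))
    = ((3 - 2 * \<i> * of_real nu) ^ 2 / W + (3 + 2 * \<i> * of_real nu) ^ 2 * W - 2 * (9 - 4 * of_real nu ^ 2))
      / (16 * of_real nu ^ 2)"
proof -
  have d: "d = of_real (Re d) + \<i> * of_real (pi * nu / 2)"
    using assms(2) by (simp add: complex_eq_iff)
  have plus: "exp (2 * \<i> * d) * cpow (- \<i> * of_real (exp r)) (2 * \<i> * of_real nu) = W"
    unfolding cpow_def Ln_neg_i_exp W_def exp_add[symmetric] by (subst d) (simp add: algebra_simps)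
  have "exp (- 2 * \<i> * d) * cpow (- \<i> * of_real (exp r)) (- 2 * \<i> * of_real nu) = exp (- (2 * \<i> * of_real (Re d + nu * r)))"
    unfolding cpow_def Ln_neg_i_exp exp_add[symmetric] by (subst d) (simp add: algebra_simps)
  then have minus: "exp (- 2 * \<i> * d) * cpow (- \<i> * of_real (exp r)) (- 2 * \<i> * of_real nu) = 1 / W"
    unfolding W_def by (simp add: exp_minus inverse_eq_divide)
  have "W \<noteq> 0"
    unfolding W_def by simp
  have "y1 nu d (- \<i> * of_real (exp r))
    = (3 - 2 * \<i> * of_real nu) ^ 2 / (16 * of_real nu ^ 2) * (exp (- 2 * \<i> * d) * cpow (- \<i> * of_real (exp r)) (- 2 * \<i> * of_real nu))
      - (9 - 4 * of_real nu ^ 2) / (8 * of_real nu ^ 2)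
      + (3 + 2 * \<i> * of_real nu) ^ 2 / (16 * of_real nu ^ 2) * (exp (2 * \<i> * d) * cpow (- \<i> * of_real (exp r)) (2 * \<i> * of_real nu))"
    unfolding y1_def by (simp only: mult.assoc)
  then show ?thesis
    unfolding plus minus using assms(1) \<open>W \<noteq> 0\<close> by (simp add: field_simps)
qed

lemma exp_two_i_minus_multiple_pi: "exp (2 * \<i> * of_real (x - real k * pi)) = exp (2 * \<i> * of_real x)"
proof -
  have "2 * \<i> * of_real (x - real k * pi) = 2 * \<i> * of_real x - of_nat k * (2 * of_real pi * \<i>)"
    by (simp add: algebra_simps)
  then show ?thesis
    by (simp only: exp_diff exp_of_nat_mult exp_two_pi_i) simp
qed

lemma geometric_sequence_on_negative_imaginary_axis:
  fixes c nu :: real and s :: "nat \<Rightarrow> complex"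
  assumes "0 < nu" and s: "\<And>k. s k = - \<i> * of_real (exp (c - real k * pi / nu))"
  shows "inj s" "s \<longlonglongrightarrow> 0" "Re (s k) = 0" "Im (s k) < 0" "norm (s k) \<le> exp c" "norm (s 0) = exp c"
proof -
  have s_power: "s k = - \<i> * of_real (exp c) * of_real (exp (- pi / nu)) ^ k" for k
  proof -
    have "exp (c - real k * pi / nu) = exp c * exp (real k * (- pi / nu))"
      by (simp add: exp_add[symmetric])
    then show ?thesis
      unfolding s exp_of_nat_mult by simp
  qed
  show "inj s"
  proof (rule injI)
    fix k j
    assume "s k = s j"
    then have "c - real k * pi / nu = c - real j * pi / nu"
      unfolding s by (simp add: complex_eq_iff)
    then show "k = j"
      using assms(1) by (simp add: field_simps)
  qed
  have "norm (of_real (exp (- pi / nu)) :: complex) < 1"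
    using assms(1) by simp
  then show "s \<longlonglongrightarrow> 0"
    unfolding s_power by (intro tendsto_mult_right_zero LIMSEQ_power_zero)
  show "Re (s k) = 0" "Im (s k) < 0"
    unfolding s by simp_all
  show "norm (s k) \<le> exp c"
    unfolding s using assms(1) by (simp add: norm_mult divide_nonneg_pos)
  show "norm (s 0) = exp c"
    unfolding s by (simp add: norm_mult)
qed

lemma zero_seq1_eq: "zero_seq1 nu d k = - \<i> * of_real (exp (- Re d / nu - real k * pi / nu))"
proof -
  have "exp (- \<i> * of_real pi / 2) = - \<i>"
    by (simp add: complex_eq_iff Re_exp Im_exp)
  then show ?thesis
    unfolding zero_seq1_def exp_of_real by simp
qed

lemma polar_ratio_three_two_i:
  fixes nu :: real
  assumes "0 < nu"
  defines "q \<equiv> (3 - 2 * \<i> * of_real nu) / (3 + 2 * \<i> * of_real nu)"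
  shows "q = exp (\<i> * of_real (Arg q))" "Ln q = \<i> * of_real (Arg q)" "Arg q \<le> 0"
proof -
  have nonzero: "3 + 2 * \<i> * of_real nu \<noteq> 0" "3 - 2 * \<i> * of_real nu \<noteq> 0"
    by (simp_all add: complex_eq_iff)
  have "cnj (3 + 2 * \<i> * of_real nu) = 3 - 2 * \<i> * of_real nu"
    by (simp add: complex_eq_iff)
  then have "norm q = 1"
    unfolding q_def using nonzero by (metis complex_mod_cnj norm_divide divide_self norm_eq_zero)
  moreover from this have "q \<noteq> 0"
    by auto
  ultimately show "q = exp (\<i> * of_real (Arg q))" "Ln q = \<i> * of_real (Arg q)"
    using Arg_eq[of q] Ln_Arg[of q] by simp_all
  have "q = (3 - 2 * \<i> * of_real nu) * (3 - 2 * \<i> * of_real nu) / ((3 + 2 * \<i> * of_real nu) * (3 - 2 * \<i> * of_real nu))"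
    unfolding q_def using nonzero by simp
  also have "(3 + 2 * \<i> * of_real nu) * (3 - 2 * \<i> * of_real nu) = of_real (9 + 4 * nu\<^sup>2)"
    by (simp add: algebra_simps power2_eq_square)
  finally have "q = (3 - 2 * \<i> * of_real nu) ^ 2 / of_real (9 + 4 * nu\<^sup>2)"
    by (simp add: power2_eq_square)
  then have "Im q = - 12 * nu / (9 + 4 * nu\<^sup>2)"
    by (simp add: power2_eq_square)
  then have "Im q < 0"
    using assms(1) by (simp add: add_pos_nonneg)
  then show "Arg q \<le> 0"
    using Arg_less_0[of q] by linarith
qed

lemma zero_seq2_eq:
  fixes nu :: real
  assumes "0 < nu"
  defines "theta \<equiv> Arg ((3 - 2 * \<i> * of_real nu) / (3 + 2 * \<i> * of_real nu))"
  shows "zero_seq2 nu d k = zero_seq1 nu d k * exp (of_real (1 / nu * theta))"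
    and "zero_seq2 nu d k = - \<i> * of_real (exp ((- Re d / nu + theta / nu) - real k * pi / nu))"
proof -
  have "exp (- \<i> / of_real nu * Ln ((3 - 2 * \<i> * of_real nu) / (3 + 2 * \<i> * of_real nu)))
      = of_real (exp (1 / nu * theta))"
    unfolding polar_ratio_three_two_i(2)[OF assms(1)] theta_def using assms(1)
    by (simp add: exp_of_real[symmetric] field_simps)
  then show "zero_seq2 nu d k = zero_seq1 nu d k * exp (of_real (1 / nu * theta))"
    and "zero_seq2 nu d k = - \<i> * of_real (exp ((- Re d / nu + theta / nu) - real k * pi / nu))"
    unfolding zero_seq2_def zero_seq1_eq exp_of_real by (simp_all add: algebra_simps flip: of_real_mult exp_add)
qed

lemma y1_zero_seq1:
  assumes "0 < nu" "Im d = pi * nu / 2"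
  shows "y1 nu d (zero_seq1 nu d k) = 0"
proof -
  define r where "r = - Re d / nu - real k * pi / nu"
  have phase: "Re d + nu * r = 0 - real k * pi"
    unfolding r_def using assms(1) by (simp add: field_simps)
  have "exp (2 * \<i> * of_real (Re d + nu * r)) = 1"
    unfolding phase exp_two_i_minus_multiple_pi by simp
  moreover have "nu \<noteq> 0"
    using assms(1) by simp
  ultimately show ?thesis
    unfolding zero_seq1_eq r_def[symmetric] y1_on_negative_imaginary_axis[OF \<open>nu \<noteq> 0\<close> assms(2)]
    by (simp add: power2_eq_square algebra_simps)
qed

lemma y1_zero_seq2:
  assumes "0 < nu" "Im d = pi * nu / 2"
  shows "y1 nu d (zero_seq2 nu d k) = 0"
proof -
  define q where "q = (3 - 2 * \<i> * of_real nu) / (3 + 2 * \<i> * of_real nu)"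
  define r where "r = (- Re d / nu + Arg q / nu) - real k * pi / nu"
  have nonzero: "3 + 2 * \<i> * of_real nu \<noteq> 0" "3 - 2 * \<i> * of_real nu \<noteq> 0"
    by (simp_all add: complex_eq_iff)
  have phase: "Re d + nu * r = Arg q - real k * pi"
    unfolding r_def using assms(1) by (simp add: field_simps)
  have "exp (2 * \<i> * of_real (Re d + nu * r)) = exp (\<i> * of_real (Arg q)) ^ 2"
    unfolding phase exp_two_i_minus_multiple_pi by (simp add: power2_eq_square mult.assoc exp_add[symmetric])
  also have "\<dots> = q ^ 2"
    unfolding q_def using polar_ratio_three_two_i(1)[OF assms(1)] by simp
  finally have W: "exp (2 * \<i> * of_real (Re d + nu * r)) = q ^ 2" .
  have "(3 - 2 * \<i> * of_real nu) ^ 2 / q ^ 2 + (3 + 2 * \<i> * of_real nu) ^ 2 * q ^ 2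
      = (3 + 2 * \<i> * of_real nu) ^ 2 + (3 - 2 * \<i> * of_real nu) ^ 2"
    unfolding q_def using nonzero by (simp add: power_divide)
  moreover have "nu \<noteq> 0"
    using assms(1) by simp
  ultimately show ?thesis
    unfolding zero_seq2_eq(2)[OF assms(1)] q_def[symmetric] r_def[symmetric]
      y1_on_negative_imaginary_axis[OF \<open>nu \<noteq> 0\<close> assms(2)] W
    by (simp add: power2_eq_square algebra_simps)
qed

lemma zero_seqs_on_negative_imaginary_axis:
  fixes nu :: real and d :: complex
  assumes "0 < nu"
  shows "inj (zero_seq1 nu d)" "inj (zero_seq2 nu d)"
    "zero_seq1 nu d \<longlonglongrightarrow> 0" "zero_seq2 nu d \<longlonglongrightarrow> 0"
    "Re (zero_seq1 nu d k) = 0" "Im (zero_seq1 nu d k) < 0"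
    "Re (zero_seq2 nu d k) = 0" "Im (zero_seq2 nu d k) < 0"
    "norm (zero_seq1 nu d k) \<le> norm (zero_seq1 nu d 0)" "norm (zero_seq2 nu d k) \<le> norm (zero_seq1 nu d 0)"
    "norm (zero_seq1 nu d 0) = exp (- Re d / nu)"
proof -
  define theta where "theta = Arg ((3 - 2 * \<i> * of_real nu) / (3 + 2 * \<i> * of_real nu))"
  note geometric1 = geometric_sequence_on_negative_imaginary_axis[OF assms, of "zero_seq1 nu d" "- Re d / nu"]
  note geometric2 = geometric_sequence_on_negative_imaginary_axis[OF assms, of "zero_seq2 nu d" "- Re d / nu + theta / nu"]
  note geometric1 = geometric1[OF zero_seq1_eq]
  note geometric2 = geometric2[OF zero_seq2_eq(2)[OF assms, folded theta_def]]
  show "inj (zero_seq1 nu d)" "inj (zero_seq2 nu d)" "zero_seq1 nu d \<longlonglongrightarrow> 0" "zero_seq2 nu d \<longlonglongrightarrow> 0"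
    "Re (zero_seq1 nu d k) = 0" "Im (zero_seq1 nu d k) < 0" "Re (zero_seq2 nu d k) = 0" "Im (zero_seq2 nu d k) < 0"
    "norm (zero_seq1 nu d k) \<le> norm (zero_seq1 nu d 0)" "norm (zero_seq1 nu d 0) = exp (- Re d / nu)"
    using geometric1 geometric2 by simp_all
  have "theta / nu \<le> 0"
    unfolding theta_def using polar_ratio_three_two_i(3)[OF assms] assms by (simp add: divide_nonpos_pos)
  then have "exp (- Re d / nu + theta / nu) \<le> exp (- Re d / nu)"
    by simp
  then show "norm (zero_seq2 nu d k) \<le> norm (zero_seq1 nu d 0)"
    using geometric1(6) geometric2(5)[of k] by linarith
qed

lemma exp_bounds_of_phase_bounds:
  fixes nu T :: real
  assumes nu: "30634/100000 \<le> nu" "nu \<le> 30636/100000"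
    and T: "0.243727 \<le> T" "T \<le> 0.24381"
  shows "0.0291 \<le> exp (- ((pi / 2 - 2 * T) / nu))" "exp (- ((pi / 2 - 2 * T) / nu)) < 0.0292"
proof -
  have "0 \<le> nu"
    using nu by simp
  have "pi / 2 - 2 * T \<le> 3.1415926535899 / 2 - 2 * 0.243727"
    using pi_approx T by simp
  then have "(pi / 2 - 2 * T) / nu \<le> (3.1415926535899 / 2 - 2 * 0.243727) / nu"
    using \<open>0 \<le> nu\<close> by (rule divide_right_mono)
  also have "\<dots> \<le> (3.1415926535899 / 2 - 2 * 0.243727) / (30634/100000)"
    using nu by (intro divide_left_mono) auto
  also have "\<dots> \<le> 35365/10000"
    by simp
  finally have X_upper: "(pi / 2 - 2 * T) / nu \<le> 35365/10000" .
  have "(35356/10000 :: real) \<le> (3.141592653588 / 2 - 2 * 0.24381) / (30636/100000)"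
    by simp
  also have "\<dots> \<le> (3.141592653588 / 2 - 2 * 0.24381) / nu"
    using nu by (intro divide_left_mono) auto
  also have "3.141592653588 / 2 - 2 * 0.24381 \<le> pi / 2 - 2 * T"
    using pi_approx T by simp
  then have "(3.141592653588 / 2 - 2 * 0.24381) / nu \<le> (pi / 2 - 2 * T) / nu"
    using \<open>0 \<le> nu\<close> by (rule divide_right_mono)
  finally have X_lower: "35356/10000 \<le> (pi / 2 - 2 * T) / nu" .
  have "exp ((pi / 2 - 2 * T) / nu) \<le> exp (35365/10000)"
    using X_upper by simp
  also have "\<dots> \<le> (\<Sum>m<18. (35365/10000::real) ^ m / fact m) / (1 - (35365/10000::real) ^ 18 / fact 18)"
    by (rule exp_le_taylor_quotient) (simp_all add: fact_numeral power_divide)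
  also have "\<dots> \<le> 34.35"
    by (simp add: fact_numeral lessThan_nat_numeral power_divide)
  finally have upper: "exp ((pi / 2 - 2 * T) / nu) \<le> 34.35" .
  have "(34.3::real) \<le> (\<Sum>m<16. (35356/10000::real) ^ m / fact m)"
    by (simp add: fact_numeral lessThan_nat_numeral power_divide)
  also have "\<dots> \<le> exp (35356/10000)"
    by (rule taylor_le_exp) simp
  also have "\<dots> \<le> exp ((pi / 2 - 2 * T) / nu)"
    using X_lower by simp
  finally have lower: "34.3 \<le> exp ((pi / 2 - 2 * T) / nu)" .
  show "0.0291 \<le> exp (- ((pi / 2 - 2 * T) / nu))" "exp (- ((pi / 2 - 2 * T) / nu)) < 0.0292"
    unfolding exp_minus using upper lower by (simp_all add: field_simps)
qed

theorem proposition8: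
  fixes nu :: real and d :: complex
  assumes nu_pos: "nu > 0"
    and p0x: "- 7 = - 2 * cosh (2 * pi * nu)"
    and d_const: "is_integration_constant_d (-1) (-7) (-7) nu d"
    and d_norm: "0 \<le> Re d" "Re d \<le> pi"
  shows "Im d / nu = pi / 2
    \<and> (\<forall>k. y1 nu d (zero_seq1 nu d k) = 0 \<and> y1 nu d (zero_seq2 nu d k) = 0)
    \<and> (\<forall>k. zero_seq2 nu d k = zero_seq1 nu d k
              * exp (of_real (1 / nu * Arg ((3 - 2 * \<i> * of_real nu) / (3 + 2 * \<i> * of_real nu)))))
    \<and> (\<forall>k. norm (zero_seq1 nu d k) \<le> norm (zero_seq1 nu d 0)
           \<and> norm (zero_seq2 nu d k) \<le> norm (zero_seq1 nu d 0))
    \<and> (\<forall>k. Re (zero_seq1 nu d k) = 0 \<and> Im (zero_seq1 nu d k) < 0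
           \<and> Re (zero_seq2 nu d k) = 0 \<and> Im (zero_seq2 nu d k) < 0)
    \<and> inj (zero_seq1 nu d) \<and> inj (zero_seq2 nu d)
    \<and> zero_seq1 nu d \<longlonglongrightarrow> 0 \<and> zero_seq2 nu d \<longlonglongrightarrow> 0
    \<and> 0.0291 \<le> norm (zero_seq1 nu d 0) \<and> norm (zero_seq1 nu d 0) < 0.0292"
proof -
  have cosh: "cosh (2 * pi * nu) = 7/2"
    using p0x by simp
  note d = integration_constant_CP2[OF nu_pos cosh d_const d_norm]
  note nu_bounds = bounds_of_cosh_double_pi_eq[OF nu_pos cosh]
  have "norm (zero_seq1 nu d 0) = exp (- ((pi / 2 - 2 * phase_sum nu) / nu))"
    using zero_seqs_on_negative_imaginary_axis(11)[OF nu_pos] d(1) by simp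
  with exp_bounds_of_phase_bounds[OF nu_bounds phase_sum_bounds[OF nu_bounds]]
  have "0.0291 \<le> norm (zero_seq1 nu d 0)" "norm (zero_seq1 nu d 0) < 0.0292"
    by simp_all
  then show ?thesis
    using nu_pos d(2) y1_zero_seq1 y1_zero_seq2 zero_seq2_eq(1) zero_seqs_on_negative_imaginary_axis
    by simp
qed

end
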